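(* Let $\phi_n(x)=((n+1)x^2-3x-n)U_n(x)+(x+1)U_{n-1}(x)+x+1$. Define, for $k\ge1$, \[ Q_{2k}(x)=((2k+1)x^2-3x-2k)(U_k(x)-U_{k-1}(x))+(x+1)(U_{k-1}(x)-U_{k-2}(x)), \] and, for $k\ge0$, \[ Q_{2k+1}(x)=((2k+2)x^2-3x-2k-1)(U_{k+1}(x)-U_{k-1}(x))+(x+1)(U_k(x)-U_{k-2}(x)). \] Then $\phi_n(x)=U^{\mathrm e}_n(x)\,Q_n(x)$ for all $n\ge1$.
   Context: $U_n$ is the Chebyshev polynomial of the second kind, $U_n(\cos\theta)=\sin((n+1)\theta)/\sin\theta$, extended to negative indices via the recurrence $U_{k+1}=2xU_k-U_{k-1}$, i.e. $U_{-1}=0$, $U_{-2}=-1$. $U^{\mathrm e}_n$ is defined by $U^{\mathrm e}_n(\cos\theta)=\frac{\sin((n+1)\theta/2)}{\sin(\theta/2)}$ for $n$ even and $U^{\mathrm e}_n(\cos\theta)=\frac{\sin((n+1)\theta/2)}{\sin\theta}$ for $n$ odd (a polynomial in $\cos\theta$). Note $\phi_n(x)=\frac14\Phi_n(2x)$ where $\Phi_n(x)=((n+1)x^2-6x-4n)U_n(x/2)+2(x+2)U_{n-1}(x/2)+2(x+2)$. *)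

theory Defs
  imports Complex_Main "HOL-Computational_Algebra.Polynomial"
begin

fun chebU_nat :: "nat \<Rightarrow> real \<Rightarrow> real" where
  "chebU_nat 0 x = 1"
| "chebU_nat (Suc 0) x = 2 * x"
| "chebU_nat (Suc (Suc n)) x = 2 * x * chebU_nat (Suc n) x - chebU_nat n x"

text \<open>Extension to all integer indices compatible with the recurrence
  U_{k+1} = 2x U_k - U_{k-1}: U_{-1} = 0, U_{-k} = - U_{k-2} for k >= 2.\<close>
definition chebU :: "int \<Rightarrow> real \<Rightarrow> real" where
  "chebU k x = (if k \<ge> 0 then chebU_nat (nat k) x
               else if k = -1 then 0
               else - chebU_nat (nat (-k - 2)) x)"

definition chebUe_poly :: "nat \<Rightarrow> real poly" where
  "chebUe_poly n = (THE p. \<forall>t. if even n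
       then (sin (t/2) \<noteq> 0 \<longrightarrow> poly p (cos t) = sin ((n+1)*t/2) / sin (t/2))
       else (sin t \<noteq> 0 \<longrightarrow> poly p (cos t) = sin ((n+1)*t/2) / sin t))"

definition chebUe :: "nat \<Rightarrow> real \<Rightarrow> real" where
  "chebUe n x = poly (chebUe_poly n) x"

definition phi :: "nat \<Rightarrow> real \<Rightarrow> real" where
  "phi n x = ((real n+1)*x^2 - 3*x - real n) * chebU (int n) x + (x+1) * chebU (int n - 1) x + x + 1"

definition Qpoly :: "nat \<Rightarrow> real \<Rightarrow> real" where
  "Qpoly n (x::real) = (if even n then
      (let k = int (n div 2) in
        ((2*of_int k+1)*x^2 - 3*x - 2*of_int k) * (chebU k x - chebU (k-1) x)
        + (x+1) * (chebU (k-1) x - chebU (k-2) x))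
    else
      (let k = int (n div 2) in
        ((2*of_int k+2)*x^2 - 3*x - 2*of_int k - 1) * (chebU (k+1) x - chebU (k-1) x)
        + (x+1) * (chebU k x - chebU (k-2) x)))"

end

theory Submission
  imports Defs
begin

text \<open>
  With k = n div 2, the addition formula U(m+n) = U(m) U(n) - U(m-1) U(n-1) writes U(n) and U(n-1)
  in terms of U(k-2), ..., U(k+1); the sine identities sin((k+1)t) = sin t U(k)(cos t) and
  sin((2k+1)s) = sin s (U(k) + U(k-1))(cos 2s) identify U^e(n) as U(k) for odd n and as
  U(k) + U(k-1) for even n. The two sides of the theorem then differ by a multiple of
  U(k-1)^2 - U(k) U(k-2) - 1, which vanishes by Cassini's identity. All identities between the U(k)
  follow from the uniqueness of integer-indexed solutions of f(k+1) = c f(k) - f(k-1) with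
  prescribed f(0) and f(1).
\<close>

lemma chebU_initial [simp]:
  "chebU (-2) x = -1" "chebU (-1) x = 0" "chebU 0 x = 1" "chebU 1 x = 2 * x"
  by (simp_all add: chebU_def)

lemma chebU_rec: "chebU (k + 1) x = 2 * x * chebU k x - chebU (k - 1) x"
proof -
  consider "k \<ge> 1" | "k \<in> {-2, -1, 0}" | "k \<le> -3" by force
  then show ?thesis
  proof cases
    case 1
    define m where "m = nat (k - 1)"
    have "nat (k + 1) = Suc (Suc m)" "nat k = Suc m" "nat (k - 1) = m"
      using 1 by (auto simp: m_def)
    with 1 show ?thesis by (simp add: chebU_def)
  next
    case 3
    define m where "m = nat (- k - 3)"
    have "nat (- k - 2) = Suc m" "nat (- 3 - k) = m" "nat (- 1 - k) = Suc (Suc m)"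
      using 3 by (auto simp: m_def)
    with 3 show ?thesis by (simp add: chebU_def)
  qed (auto simp: chebU_def)
qed

lemma chebU_rec_pred: "chebU k x = 2 * x * chebU (k - 1) x - chebU (k - 2) x"
  using chebU_rec[of "k - 1" x] by simp

lemma chebyshev_recurrence_unique:
  fixes f g :: "int \<Rightarrow> 'a::ring"
  assumes f: "\<And>k. f (k + 1) = c * f k - f (k - 1)"
    and g: "\<And>k. g (k + 1) = c * g k - g (k - 1)"
    and "f 0 = g 0" "f 1 = g 1"
  shows "f = g"
proof
  fix k
  have "f k = g k \<and> f (k + 1) = g (k + 1)"
  proof (induction k rule: int_induct[where k = 0])
    case base
    show ?case using assms by simp
  next
    case (step1 i)
    then show ?case using f[of "i + 1"] g[of "i + 1"] by simp
  next
    case (step2 i)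
    have "f (i - 1) = c * f i - f (i + 1)" "g (i - 1) = c * g i - g (i + 1)"
      using f[of i] g[of i] by (simp_all add: algebra_simps)
    with step2 show ?case by simp
  qed
  then show "f k = g k" ..
qed

lemma chebU_add: "chebU (m + n) x = chebU m x * chebU n x - chebU (m - 1) x * chebU (n - 1) x"
proof -
  have "(\<lambda>n. chebU (m + n) x)
      = (\<lambda>n. chebU m x * chebU n x - chebU (m - 1) x * chebU (n - 1) x)"
  proof (rule chebyshev_recurrence_unique[where c = "2 * x"])
    show "chebU (m + (k + 1)) x = 2 * x * chebU (m + k) x - chebU (m + (k - 1)) x" for k
      using chebU_rec[of "m + k" x] by (simp add: add.assoc add_diff_eq)
    show "chebU m x * chebU (k + 1) x - chebU (m - 1) x * chebU (k + 1 - 1) x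
        = 2 * x * (chebU m x * chebU k x - chebU (m - 1) x * chebU (k - 1) x)
          - (chebU m x * chebU (k - 1) x - chebU (m - 1) x * chebU (k - 1 - 1) x)" for k
      unfolding chebU_rec by (simp add: chebU_rec_pred[of k x] algebra_simps)
  qed (use chebU_rec[of m x] in simp_all)
  then show ?thesis by (simp add: fun_eq_iff)
qed

lemma chebU_uminus: "chebU (- k) x = - chebU (k - 2) x"
proof -
  have "(\<lambda>k. chebU (- k) x) = (\<lambda>k. - chebU (k - 2) x)"
  proof (rule chebyshev_recurrence_unique[where c = "2 * x"])
    show "chebU (- (k + 1)) x = 2 * x * chebU (- k) x - chebU (- (k - 1)) x" for k
    proof -
      have "- (k + 1) = - k - 1" "- (k - 1) = - k + 1" by simp_all
      then show ?thesis using chebU_rec[of "- k" x] by (simp only:)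
    qed
    show "- chebU (k + 1 - 2) x = 2 * x * - chebU (k - 2) x - - chebU (k - 1 - 2) x" for k
      using chebU_rec[of "k - 2" x] by (simp add: algebra_simps)
  qed simp_all
  then show ?thesis by (simp add: fun_eq_iff)
qed

lemma chebU_cassini: "chebU (k - 1) x ^ 2 - chebU k x * chebU (k - 2) x = 1"
proof -
  have "chebU (- k - 1) x = - chebU (k - 1) x"
  proof -
    have "- k - 1 = - (k + 1)" by simp
    then show ?thesis using chebU_uminus[of "k + 1" x] by (simp only:) simp
  qed
  then show ?thesis
    using chebU_add[of k "- k" x] by (simp add: chebU_uminus power2_eq_square algebra_simps)
qed

lemma sin_mult_eq_chebU: "sin (of_int (k + 1) * t) = sin t * chebU k (cos t)"
proof -
  have "(\<lambda>k. sin (of_int (k + 1) * t)) = (\<lambda>k. sin t * chebU k (cos t))"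
  proof (rule chebyshev_recurrence_unique[where c = "2 * cos t"])
    show "sin (of_int (k + 1 + 1) * t)
        = 2 * cos t * sin (of_int (k + 1) * t) - sin (of_int (k - 1 + 1) * t)" for k
      using sin_times_cos[of "of_int (k + 1) * t" t] by (simp add: algebra_simps)
    show "sin t * chebU (k + 1) (cos t)
        = 2 * cos t * (sin t * chebU k (cos t)) - sin t * chebU (k - 1) (cos t)" for k
      unfolding chebU_rec by (simp add: algebra_simps)
  qed (simp_all add: sin_double)
  then show ?thesis by (simp add: fun_eq_iff)
qed

lemma sin_odd_mult_eq_chebU:
  "sin (of_int (2 * k + 1) * s) = sin s * (chebU k (cos (2 * s)) + chebU (k - 1) (cos (2 * s)))"
proof -
  have "(\<lambda>k. sin (of_int (2 * k + 1) * s))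
      = (\<lambda>k. sin s * (chebU k (cos (2 * s)) + chebU (k - 1) (cos (2 * s))))"
  proof (rule chebyshev_recurrence_unique[where c = "2 * cos (2 * s)"])
    show "sin (of_int (2 * (k + 1) + 1) * s)
        = 2 * cos (2 * s) * sin (of_int (2 * k + 1) * s) - sin (of_int (2 * (k - 1) + 1) * s)" for k
      using sin_times_cos[of "of_int (2 * k + 1) * s" "2 * s"] by (simp add: algebra_simps)
    show "sin s * (chebU (k + 1) (cos (2 * s)) + chebU (k + 1 - 1) (cos (2 * s)))
        = 2 * cos (2 * s) * (sin s * (chebU k (cos (2 * s)) + chebU (k - 1) (cos (2 * s))))
          - sin s * (chebU (k - 1) (cos (2 * s)) + chebU (k - 1 - 1) (cos (2 * s)))" for k
      unfolding chebU_rec by (simp add: chebU_rec_pred[of k] algebra_simps)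
  qed (use sin_times_cos[of s "2 * s"] in \<open>simp_all add: algebra_simps\<close>)
  then show ?thesis by (simp add: fun_eq_iff)
qed

fun chebU_nat_poly :: "nat \<Rightarrow> real poly" where
  "chebU_nat_poly 0 = 1"
| "chebU_nat_poly (Suc 0) = [:0, 2:]"
| "chebU_nat_poly (Suc (Suc n)) = [:0, 2:] * chebU_nat_poly (Suc n) - chebU_nat_poly n"

lemma poly_chebU_nat_poly: "poly (chebU_nat_poly n) x = chebU_nat n x"
  by (induction n rule: chebU_nat_poly.induct) auto

lemma chebU_polynomial:
  obtains p where "\<And>x. poly p x = chebU k x"
proof (cases "k \<ge> 0")
  case True
  then show ?thesis
    using that[of "chebU_nat_poly (nat k)"] by (simp add: chebU_def poly_chebU_nat_poly)
next
  case False
  then show ?thesis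
    using that[of "if k = -1 then 0 else - chebU_nat_poly (nat (- k - 2))"]
    by (simp add: chebU_def poly_chebU_nat_poly)
qed

lemma poly_eqI_on_infinite:
  fixes p q :: "'a::idom poly"
  assumes "infinite A" and "\<And>x. x \<in> A \<Longrightarrow> poly p x = poly q x"
  shows "p = q"
proof (rule ccontr)
  assume "p \<noteq> q"
  then have "finite {x. poly (p - q) x = 0}" by (intro poly_roots_finite) simp
  moreover have "A \<subseteq> {x. poly (p - q) x = 0}" using assms(2) by auto
  ultimately show False using assms(1) finite_subset by blast
qed

definition chebUe_poly_spec :: "nat \<Rightarrow> real poly \<Rightarrow> bool" where
  "chebUe_poly_spec n p \<longleftrightarrow> (\<forall>t. if even n
       then (sin (t/2) \<noteq> 0 \<longrightarrow> poly p (cos t) = sin ((n+1)*t/2) / sin (t/2))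
       else (sin t \<noteq> 0 \<longrightarrow> poly p (cos t) = sin ((n+1)*t/2) / sin t))"

lemma chebUe_poly_eqI:
  assumes "chebUe_poly_spec n p"
  shows "chebUe_poly n = p"
proof -
  have "q = p" if q: "chebUe_poly_spec n q" for q
  proof (rule poly_eqI_on_infinite[of "{-1<..<1}"])
    fix y :: real
    assume "y \<in> {-1<..<1}"
    then have "0 < arccos y" "arccos y < pi" "cos (arccos y) = y"
      using arccos_lt_bounded by auto
    then have "sin (arccos y) > 0" "sin (arccos y / 2) > 0"
      by (simp_all add: sin_gt_zero)
    with q assms \<open>cos (arccos y) = y\<close> show "poly q y = poly p y"
      unfolding chebUe_poly_spec_def by (cases "even n") (auto dest!: spec[of _ "arccos y"])
  qed simp
  then have "(THE p. chebUe_poly_spec n p) = p"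
    using assms by (rule the_equality[rotated])
  then show ?thesis by (simp add: chebUe_poly_def chebUe_poly_spec_def)
qed

lemma chebUe_odd: "chebUe (2 * k + 1) x = chebU (int k) x"
proof -
  obtain p where p: "\<And>x. poly p x = chebU (int k) x" using chebU_polynomial by metis
  have "poly p (cos t) = sin ((real (2 * k + 1) + 1) * t / 2) / sin t" if "sin t \<noteq> 0" for t
  proof -
    have "(real (2 * k + 1) + 1) * t / 2 = of_int (int k + 1) * t" by (simp add: field_simps)
    then show ?thesis using that by (simp only: p sin_mult_eq_chebU) simp
  qed
  then have "chebUe_poly_spec (2 * k + 1) p" by (simp add: chebUe_poly_spec_def)
  then show ?thesis by (simp add: chebUe_def chebUe_poly_eqI p)
qed

lemma chebUe_even: "chebUe (2 * k) x = chebU (int k) x + chebU (int k - 1) x"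
proof -
  obtain p where p: "\<And>x. poly p x = chebU (int k) x" using chebU_polynomial by metis
  obtain q where q: "\<And>x. poly q x = chebU (int k - 1) x" using chebU_polynomial by metis
  have "poly (p + q) (cos t) = sin ((real (2 * k) + 1) * t / 2) / sin (t / 2)"
    if "sin (t / 2) \<noteq> 0" for t :: real
  proof -
    have "(real (2 * k) + 1) * t / 2 = of_int (2 * int k + 1) * (t / 2)" by (simp add: field_simps)
    moreover have "cos t = cos (2 * (t / 2))" by simp
    ultimately show ?thesis using that by (simp only: poly_add p q sin_odd_mult_eq_chebU) simp
  qed
  then have "chebUe_poly_spec (2 * k) (p + q)" by (simp add: chebUe_poly_spec_def)
  then show ?thesis by (simp add: chebUe_def chebUe_poly_eqI p q)
qed

lemma phi_even: "phi (2 * k) x = (chebU (int k) x + chebU (int k - 1) x) * Qpoly (2 * k) x"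
proof -
  define a b c where "a = chebU (int k) x" and "b = chebU (int k - 1) x"
    and "c = chebU (int k - 2) x"
  define A where "A = (2 * real k + 1) * x ^ 2 - 3 * x - 2 * real k"
  have U_n: "chebU (int (2 * k)) x = a * a - b * b"
    using chebU_add[of "int k" "int k" x] by (simp add: a_def b_def)
  have U_pred_n: "chebU (int (2 * k) - 1) x = b * a - c * b"
    using chebU_add[of "int k - 1" "int k" x] by (simp add: a_def b_def c_def)
  have "phi (2 * k) x = A * (a * a - b * b) + (x + 1) * (b * a - c * b) + x + 1"
    unfolding phi_def U_n U_pred_n by (simp add: A_def algebra_simps)
  moreover have "Qpoly (2 * k) x = A * (a - b) + (x + 1) * (b - c)"
    by (simp add: Qpoly_def Let_def A_def a_def b_def c_def)
  moreover have "b ^ 2 - a * c = 1"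
    using chebU_cassini[of "int k" x] by (simp add: a_def b_def c_def)
  ultimately show ?thesis unfolding a_def [symmetric] b_def [symmetric] by algebra
qed

lemma phi_odd: "phi (2 * k + 1) x = chebU (int k) x * Qpoly (2 * k + 1) x"
proof -
  define a b c d where "a = chebU (int k) x" and "b = chebU (int k - 1) x"
    and "c = chebU (int k - 2) x" and "d = chebU (int k + 1) x"
  define A where "A = (2 * real k + 2) * x ^ 2 - 3 * x - 2 * real k - 1"
  have U_n: "chebU (int (2 * k + 1)) x = a * d - b * a"
    using chebU_add[of "int k" "int k + 1" x] by (simp add: a_def b_def d_def add_ac)
  have U_pred_n: "chebU (int (2 * k + 1) - 1) x = a * a - b * b"
    using chebU_add[of "int k" "int k" x] by (simp add: a_def b_def)
  have "phi (2 * k + 1) x = A * (a * d - b * a) + (x + 1) * (a * a - b * b) + x + 1"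
    unfolding phi_def U_n U_pred_n by (simp add: A_def algebra_simps)
  moreover have "Qpoly (2 * k + 1) x = A * (d - b) + (x + 1) * (a - c)"
    by (simp add: Qpoly_def Let_def A_def a_def b_def c_def d_def algebra_simps)
  moreover have "b ^ 2 - a * c = 1"
    using chebU_cassini[of "int k" x] by (simp add: a_def b_def c_def)
  ultimately show ?thesis unfolding a_def [symmetric] by algebra
qed

theorem theoremB4:
  fixes n :: nat and x :: real
  assumes "n \<ge> 1"
  shows "phi n x = chebUe n x * Qpoly n x"
proof (cases "even n")
  case True
  then obtain k where "n = 2 * k" by blast
  then show ?thesis by (simp add: phi_even chebUe_even)
next
  case False
  then obtain k where "n = 2 * k + 1" using oddE by blast
  then show ?thesis by (simp only: phi_odd chebUe_odd)
qed

end
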